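(* Let $n\ge1$, $s\in\{1,\dots,n\}$, let $C\in\mathbb{R}^{n\times n}$ be symmetric positive definite and $z^*=\max\{\log\det(C_{S,S}) : S\subseteq\{1,\dots,n\},\ |S|=s\}$. For every $t$ with $0<t\le\lambda_{\min}(C)$, $$z^*=\max\Big\{\log\det\big(M_t(x)+tI\big) : x\in\{0,1\}^n,\ \textstyle\sum_{i=1}^n x_i=s\Big\}-(n-s)\log(t).$$
   Context: $\log$ is natural, $C_{S,S}$ is the principal submatrix indexed by $S$, $\lambda_{\min}(C)$ is the smallest eigenvalue of $C$. For $0\le t\le\lambda_{\min}(C)$ let $A(t)\in\mathbb{R}^{n\times n}$ be a Cholesky factor of $C-tI$ (so $C-tI=A(t)^\top A(t)$), with $i$-th column $a_i(t)$, and $M_t(x)=\sum_i x_i a_i(t)a_i(t)^\top$. *)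

theory Defs
  imports Complex_Main "Jordan_Normal_Form.Char_Poly" "Jordan_Normal_Form.DL_Submatrix"
begin

definition sym_pos_def :: "nat \<Rightarrow> real mat \<Rightarrow> bool" where
  "sym_pos_def n C \<longleftrightarrow> C \<in> carrier_mat n n \<and> transpose_mat C = C \<and>
     (\<forall>v \<in> carrier_vec n. v \<noteq> 0\<^sub>v n \<longrightarrow> v \<bullet> (C *\<^sub>v v) > 0)"

definition lambda_min :: "real mat \<Rightarrow> real" where
  "lambda_min C = Min {k. eigenvalue C k}"

definition cholesky_factor :: "nat \<Rightarrow> real mat \<Rightarrow> real mat \<Rightarrow> bool" where
  "cholesky_factor n D A \<longleftrightarrow> A \<in> carrier_mat n n \<and> upper_triangular A \<and>
     (\<forall>i<n. A $$ (i,i) \<ge> 0) \<and> D = transpose_mat A * A"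

(* M(x) = sum_i x_i a_i a_i^T, a_i the i-th column of A *)
definition Mx :: "nat \<Rightarrow> real mat \<Rightarrow> real vec \<Rightarrow> real mat" where
  "Mx n A x = mat n n (\<lambda>(j,k). \<Sum>i<n. x $ i * (A $$ (j,i)) * (A $$ (k,i)))"

end

(* Write C = t I + A^T A and let B be the matrix of the columns of A indexed by S. Then
   C_{S,S} = t I + B^T B and M_t(1_S) = B B^T, so Sylvester's determinant identity
   det (t I_n + B B^T) = t^(n - |S|) det (t I_|S| + B^T B) relates the two determinants, and both
   are positive because t > 0. The 0/1 vectors with s ones are exactly the indicator vectors of
   the s-subsets S, so taking logarithms identifies the two maxima up to the shift (n - s) ln t. *)
theory Submission
  imports Defs
begin

lemma smult_mult_mat_vec:
  fixes A :: "'a :: comm_ring_1 mat"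
  assumes "A \<in> carrier_mat nr nc" and "v \<in> carrier_vec nc"
  shows "(k \<cdot>\<^sub>m A) *\<^sub>v v = k \<cdot>\<^sub>v (A *\<^sub>v v)"
  using assms by (intro eq_vecI) (auto simp: scalar_prod_def sum_distrib_left mult.assoc)

lemma scalar_prod_self_pos:
  fixes v :: "real vec"
  assumes "v \<in> carrier_vec n" and "v \<noteq> 0\<^sub>v n"
  shows "v \<bullet> v > 0"
  using conjugate_square_greater_0_vec[OF assms(1)] assms(2) by simp

lemma det_pos_if_pos_definite:
  fixes K :: "real mat"
  assumes K: "K \<in> carrier_mat n n"
    and pos: "\<And>v. v \<in> carrier_vec n \<Longrightarrow> v \<noteq> 0\<^sub>v n \<Longrightarrow> v \<bullet> (K *\<^sub>v v) > 0"
  shows "det K > 0"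
proof (rule ccontr)
  \<comment> \<open>Every point of the segment from \<open>1\<^sub>m n\<close> to \<open>K\<close> is positive definite, hence
    nonsingular, so \<open>det\<close> cannot change sign along it.\<close>
  assume "\<not> det K > 0"
  define L where "L l = l \<cdot>\<^sub>m K + (1 - l) \<cdot>\<^sub>m 1\<^sub>m n" for l :: real
  have L: "L l \<in> carrier_mat n n" for l
    unfolding L_def using K by auto
  have det_L_nonzero: "det (L l) \<noteq> 0" if l: "0 \<le> l" "l \<le> 1" for l
  proof
    assume "det (L l) = 0"
    then obtain v where v: "v \<in> carrier_vec n" "v \<noteq> 0\<^sub>v n" "L l *\<^sub>v v = 0\<^sub>v n"
      using det_0_iff_vec_prod_zero_field[OF L] by blast
    have "L l *\<^sub>v v = l \<cdot>\<^sub>v (K *\<^sub>v v) + (1 - l) \<cdot>\<^sub>v v"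
      unfolding L_def using K v
      by (simp add: add_mult_distrib_mat_vec[of _ n n] smult_mult_mat_vec[of _ n n])
    then have "v \<bullet> (L l *\<^sub>v v) = l * (v \<bullet> (K *\<^sub>v v)) + (1 - l) * (v \<bullet> v)"
      using K v by (simp add: scalar_prod_add_distrib[of _ n])
    moreover have "v \<bullet> (K *\<^sub>v v) > 0" "v \<bullet> v > 0"
      using pos scalar_prod_self_pos v by auto
    ultimately have "v \<bullet> (L l *\<^sub>v v) > 0"
      using l by (smt (verit) mult_nonneg_nonneg mult_pos_pos)
    then show False
      using v by simp
  qed
  have "continuous_on {0..1} (\<lambda>l. det (L l))"
  proof -
    have "det (L l) = (\<Sum>p | p permutes {0..<n}. signof p *
        (\<Prod>i = 0..<n. l * K $$ (i, p i) + (1 - l) * of_bool (i = p i)))" for l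
      unfolding det_def using L[of l] K
      by (auto simp: L_def permutes_in_image intro!: sum.cong arg_cong2[where f = "(*)"] prod.cong)
    then show ?thesis
      by (simp only:) (intro continuous_intros)
  qed
  moreover have "L 0 = 1\<^sub>m n" and "L 1 = K"
    unfolding L_def using K by (auto intro!: eq_matI)
  ultimately obtain l where "l \<in> {0..1}" "det (L l) = 0"
    using IVT2'[of "\<lambda>l. det (L l)" 1 0 0] \<open>\<not> det K > 0\<close> by auto
  then show False
    using det_L_nonzero by auto
qed

lemma det_smult_one_add_gram_pos:
  fixes B :: "real mat"
  assumes B: "B \<in> carrier_mat n m" and "t > 0"
  shows "det (t \<cdot>\<^sub>m 1\<^sub>m m + transpose_mat B * B) > 0" (is "det ?K > 0")
proof (rule det_pos_if_pos_definite)
  show "?K \<in> carrier_mat m m"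
    using B by simp
  fix v :: "real vec" assume v: "v \<in> carrier_vec m" "v \<noteq> 0\<^sub>v m"
  have Bv: "B *\<^sub>v v \<in> carrier_vec n"
    using B v by simp
  have "?K *\<^sub>v v = t \<cdot>\<^sub>v v + transpose_mat B *\<^sub>v (B *\<^sub>v v)"
    using B v by (simp add: add_mult_distrib_mat_vec[of _ m m] smult_mult_mat_vec[of _ m m])
  moreover have "v \<bullet> (transpose_mat B *\<^sub>v (B *\<^sub>v v)) = (B *\<^sub>v v) \<bullet> (B *\<^sub>v v)"
  proof -
    have "transpose_mat B *\<^sub>v (B *\<^sub>v v) \<in> carrier_vec m"
      using B Bv by simp
    from comm_scalar_prod[OF v(1) this] show ?thesis
      using transpose_vec_mult_scalar[OF B v(1) Bv] by (rule trans)
  qed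
  ultimately have "v \<bullet> (?K *\<^sub>v v) = t * (v \<bullet> v) + (B *\<^sub>v v) \<bullet> (B *\<^sub>v v)"
    using B v by (simp add: scalar_prod_add_distrib[of _ m])
  moreover have "(B *\<^sub>v v) \<bullet> (B *\<^sub>v v) \<ge> 0"
    using conjugate_square_ge_0_vec[of "B *\<^sub>v v"] by simp
  ultimately show "v \<bullet> (?K *\<^sub>v v) > 0"
    using scalar_prod_self_pos[OF v] \<open>t > 0\<close> by (simp add: add_pos_nonneg)
qed

lemma det_one_add_mult_comm:
  fixes U V :: "'a :: idom mat"
  assumes U: "U \<in> carrier_mat n m" and V: "V \<in> carrier_mat m n"
  shows "det (1\<^sub>m n + U * V) = det (1\<^sub>m m + V * U)"
proof -
  define X where "X = four_block_mat (1\<^sub>m n) (- U) V (1\<^sub>m m)"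
  have "X = four_block_mat (1\<^sub>m n) (0\<^sub>m n m) V (1\<^sub>m m)
      * four_block_mat (1\<^sub>m n) (- U) (0\<^sub>m m n) (1\<^sub>m m + V * U)"
    unfolding X_def using U V
    by (subst mult_four_block_mat[of _ n n _ m _ m]) (auto simp: add.commute mult_add_distrib_mat)
  then have "det X = det (1\<^sub>m m + V * U)"
    using U V by (simp add: det_mult[of _ "n + m"] det_four_block_mat_upper_right_zero[of _ n _ m]
        det_four_block_mat_lower_left_zero[of _ n _ m])
  moreover have "X = four_block_mat (1\<^sub>m n + U * V) (- U) (0\<^sub>m m n) (1\<^sub>m m)
      * four_block_mat (1\<^sub>m n) (0\<^sub>m n m) V (1\<^sub>m m)"
    unfolding X_def using U V
    by (subst mult_four_block_mat[of _ n n _ m _ m]) (auto simp: add_mult_distrib_mat)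
  then have "det X = det (1\<^sub>m n + U * V)"
    using U V by (simp add: det_mult[of _ "n + m"] det_four_block_mat_upper_right_zero[of _ n _ m]
        det_four_block_mat_lower_left_zero[of _ n _ m])
  ultimately show ?thesis
    by simp
qed

lemma det_smult_one_add_mult_comm:
  fixes U V :: "'a :: field mat"
  assumes U: "U \<in> carrier_mat n m" and V: "V \<in> carrier_mat m n"
    and "t \<noteq> 0" and "m \<le> n"
  shows "det (t \<cdot>\<^sub>m 1\<^sub>m n + U * V) = t ^ (n - m) * det (t \<cdot>\<^sub>m 1\<^sub>m m + V * U)"
proof -
  define W where "W = (1 / t) \<cdot>\<^sub>m V"
  have W: "W \<in> carrier_mat m n"
    unfolding W_def using V by simp
  have "t \<cdot>\<^sub>m 1\<^sub>m n + U * V = t \<cdot>\<^sub>m (1\<^sub>m n + U * W)"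
    "t \<cdot>\<^sub>m 1\<^sub>m m + V * U = t \<cdot>\<^sub>m (1\<^sub>m m + W * U)"
    unfolding W_def using U V \<open>t \<noteq> 0\<close>
    by (auto simp: mult_smult_distrib mult_smult_assoc_mat field_simps intro!: eq_matI)
  then show ?thesis
    using det_one_add_mult_comm[OF U W] U W \<open>t \<noteq> 0\<close> \<open>m \<le> n\<close>
    by (simp add: power_diff)
qed

lemma bij_betw_pick:
  assumes "finite S"
  shows "bij_betw (pick S) {..<card S} S"
proof -
  have "inj_on (pick S) {..<card S}"
  proof (rule linorder_inj_onI')
    fix i j assume "i \<in> {..<card S}" "j \<in> {..<card S}" "i < j"
    then show "pick S i \<noteq> pick S j"
      using pick_mono_le[of j S i] by simp
  qed
  moreover have "pick S ` {..<card S} \<subseteq> S"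
    by (auto intro: pick_in_set_le)
  ultimately show ?thesis
    using assms by (simp add: bij_betw_def card_image card_subset_eq)
qed

lemma submatrix_add:
  assumes "A \<in> carrier_mat nr nc" and "B \<in> carrier_mat nr nc"
  shows "submatrix (A + B) I J = submatrix A I J + submatrix B I J"
  using assms by (intro eq_matI) (auto simp: dim_submatrix submatrix_index pick_le)

lemma submatrix_transpose_mult:
  "submatrix (transpose_mat A * A) S S = transpose_mat (submatrix A UNIV S) * submatrix A UNIV S"
  by (intro eq_matI) (auto simp: dim_submatrix submatrix_index pick_le pick_UNIV scalar_prod_def)

lemma submatrix_smult_one:
  assumes "S \<subseteq> {0..<n}"
  shows "submatrix (t \<cdot>\<^sub>m 1\<^sub>m n) S S = t \<cdot>\<^sub>m 1\<^sub>m (card S)"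
proof -
  have S: "{i. i < n \<and> i \<in> S} = S"
    using assms by auto
  have "finite S"
    using assms finite_subset by blast
  then have "pick S k = pick S l \<longleftrightarrow> k = l" if "k < card S" "l < card S" for k l
    using bij_betw_pick[of S] that by (auto simp: bij_betw_def inj_on_def)
  then show ?thesis
    by (intro eq_matI) (auto simp: dim_submatrix submatrix_index S pick_le)
qed

lemma submatrix_UNIV_carrier:
  assumes A: "A \<in> carrier_mat nr nc" and S: "S \<subseteq> {0..<nc}"
  shows "submatrix A UNIV S \<in> carrier_mat nr (card S)"
proof
  show "dim_row (submatrix A UNIV S) = nr"
    using A by (simp add: dim_submatrix)
  have "{j. j < nc \<and> j \<in> S} = S"
    using S by auto
  then show "dim_col (submatrix A UNIV S) = card S"
    by (simp only: dim_submatrix carrier_matD(2)[OF A])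
qed

definition indicator_vec :: "nat \<Rightarrow> nat set \<Rightarrow> 'a :: zero_neq_one vec" where
  "indicator_vec n S = vec n (\<lambda>i. of_bool (i \<in> S))"

lemma sum_indicator_vec:
  assumes "S \<subseteq> {0..<n}"
  shows "(\<Sum>i<n. indicator_vec n S $ i) = (of_nat (card S) :: 'a :: semiring_1)"
proof -
  have "{..<n} \<inter> {i. i \<in> S} = S"
    using assms by auto
  then show ?thesis
    by (simp add: indicator_vec_def)
qed

lemma binary_vecs_eq_indicator_vecs:
  "{x. x \<in> carrier_vec n \<and> (\<forall>i<n. x $ i \<in> {0, 1}) \<and> (\<Sum>i<n. x $ i) = real s}
    = indicator_vec n ` {S. S \<subseteq> {0..<n} \<and> card S = s}" (is "?binary = indicator_vec n ` ?subsets")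
proof (intro equalityI subsetI)
  fix x assume "x \<in> ?binary"
  then have x: "x \<in> carrier_vec n" "\<forall>i<n. x $ i \<in> {0, 1}" "(\<Sum>i<n. x $ i) = real s"
    by auto
  define S where "S = {i. i < n \<and> x $ i = 1}"
  have S: "S \<subseteq> {0..<n}"
    by (auto simp: S_def)
  have "x = indicator_vec n S"
    using x(1,2) by (intro eq_vecI) (auto simp: S_def indicator_vec_def)
  moreover have "card S = s"
    using sum_indicator_vec[OF S, where 'a = real] x(3) calculation by simp
  ultimately show "x \<in> indicator_vec n ` ?subsets"
    using S by blast
next
  fix x :: "real vec" assume "x \<in> indicator_vec n ` ?subsets"
  then obtain S where S: "S \<subseteq> {0..<n}" "card S = s" and x: "x = indicator_vec n S"
    by blast
  have "x \<in> carrier_vec n" "\<forall>i<n. x $ i \<in> {0, 1}"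
    using x by (auto simp: indicator_vec_def)
  moreover have "(\<Sum>i<n. x $ i) = real s"
    using x sum_indicator_vec[OF S(1)] S(2) by simp
  ultimately show "x \<in> ?binary"
    by simp
qed

lemma Mx_indicator_vec:
  fixes A :: "real mat"
  assumes A: "A \<in> carrier_mat n n" and S: "S \<subseteq> {0..<n}"
  shows "Mx n A (indicator_vec n S) = submatrix A UNIV S * transpose_mat (submatrix A UNIV S)"
    (is "_ = ?B * transpose_mat ?B")
proof -
  have card_S: "card {i. i < n \<and> i \<in> S} = card S"
    using S by (intro arg_cong[where f = card]) auto
  have B: "?B \<in> carrier_mat n (card S)"
    using A S by (rule submatrix_UNIV_carrier)
  have "(?B * transpose_mat ?B) $$ (j, k) = Mx n A (indicator_vec n S) $$ (j, k)"
    if jk: "j < n" "k < n" for j k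
  proof -
    have "(?B * transpose_mat ?B) $$ (j, k) = (\<Sum>l<card S. ?B $$ (j, l) * ?B $$ (k, l))"
      using jk B by (simp add: scalar_prod_def atLeast0LessThan)
    also have "\<dots> = (\<Sum>l<card S. A $$ (j, pick S l) * A $$ (k, pick S l))"
      using jk A card_S by (intro sum.cong) (auto simp: submatrix_index pick_UNIV)
    also have "\<dots> = (\<Sum>i\<in>S. A $$ (j, i) * A $$ (k, i))"
      using S finite_subset by (intro sum.reindex_bij_betw bij_betw_pick) auto
    also have "\<dots> = (\<Sum>i<n. of_bool (i \<in> S) * A $$ (j, i) * A $$ (k, i))"
    proof -
      have "{..<n} \<inter> {i. i \<in> S} = S"
        using S by auto
      then show ?thesis
        by (simp add: mult.assoc)
    qed
    finally show ?thesis
      using jk by (simp add: Mx_def indicator_vec_def)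
  qed
  then show ?thesis
    using B by (intro eq_matI) (auto simp: Mx_def)
qed

lemma submatrix_eq_gram_of_cholesky:
  assumes "cholesky_factor n (C - t \<cdot>\<^sub>m 1\<^sub>m n) A" and C: "C \<in> carrier_mat n n"
    and S: "S \<subseteq> {0..<n}"
  shows "submatrix C S S
    = t \<cdot>\<^sub>m 1\<^sub>m (card S) + transpose_mat (submatrix A UNIV S) * submatrix A UNIV S"
proof -
  have A: "A \<in> carrier_mat n n" and gram: "C - t \<cdot>\<^sub>m 1\<^sub>m n = transpose_mat A * A"
    using assms(1) unfolding cholesky_factor_def by auto
  have "C = t \<cdot>\<^sub>m 1\<^sub>m n + (C - t \<cdot>\<^sub>m 1\<^sub>m n)"
    using C by (intro eq_matI) auto
  then have "submatrix C S S = submatrix (t \<cdot>\<^sub>m 1\<^sub>m n + transpose_mat A * A) S S"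
    by (simp only: gram)
  also have "\<dots> = submatrix (t \<cdot>\<^sub>m 1\<^sub>m n) S S + submatrix (transpose_mat A * A) S S"
    using A by (intro submatrix_add[of _ n n]) auto
  finally show ?thesis
    by (simp only: submatrix_smult_one[OF S] submatrix_transpose_mult)
qed

lemma det_submatrix_cholesky_pos:
  assumes "cholesky_factor n (C - t \<cdot>\<^sub>m 1\<^sub>m n) A" and "C \<in> carrier_mat n n"
    and "t > 0" and S: "S \<subseteq> {0..<n}"
  shows "det (submatrix C S S) > 0"
proof -
  have "A \<in> carrier_mat n n"
    using assms(1) unfolding cholesky_factor_def by auto
  then show ?thesis
    using submatrix_eq_gram_of_cholesky[OF assms(1,2) S]
      det_smult_one_add_gram_pos[OF submatrix_UNIV_carrier[OF _ S] \<open>t > 0\<close>]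
    by simp
qed

lemma det_Mx_indicator_vec_add:
  assumes "cholesky_factor n (C - t \<cdot>\<^sub>m 1\<^sub>m n) A" and C: "C \<in> carrier_mat n n"
    and "t \<noteq> 0" and S: "S \<subseteq> {0..<n}"
  shows "det (Mx n A (indicator_vec n S) + t \<cdot>\<^sub>m 1\<^sub>m n) = t ^ (n - card S) * det (submatrix C S S)"
proof -
  let ?B = "submatrix A UNIV S"
  have A: "A \<in> carrier_mat n n"
    using assms(1) unfolding cholesky_factor_def by auto
  have B: "?B \<in> carrier_mat n (card S)"
    using A S by (rule submatrix_UNIV_carrier)
  have "card S \<le> n"
    using S by (rule subset_eq_atLeast0_lessThan_card)
  have "Mx n A (indicator_vec n S) + t \<cdot>\<^sub>m 1\<^sub>m n = t \<cdot>\<^sub>m 1\<^sub>m n + ?B * transpose_mat ?B"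
    using Mx_indicator_vec[OF A S] B by (simp add: comm_add_mat[of _ n n])
  then show ?thesis
    using det_smult_one_add_mult_comm[OF B _ \<open>t \<noteq> 0\<close> \<open>card S \<le> n\<close>, of "transpose_mat ?B"] B
      submatrix_eq_gram_of_cholesky[OF assms(1) C S] by simp
qed

lemma ln_det_Mx_indicator_vec_add:
  assumes "cholesky_factor n (C - t \<cdot>\<^sub>m 1\<^sub>m n) A" and "C \<in> carrier_mat n n"
    and "t > 0" and "S \<subseteq> {0..<n}"
  shows "ln (det (Mx n A (indicator_vec n S) + t \<cdot>\<^sub>m 1\<^sub>m n))
    = ln (det (submatrix C S S)) + real (n - card S) * ln t"
  using det_Mx_indicator_vec_add[OF assms(1,2) _ assms(4)] det_submatrix_cholesky_pos[OF assms]
    \<open>t > 0\<close> by (simp add: ln_mult ln_realpow)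

theorem corollary3:
  fixes n s :: nat and C :: "real mat" and t :: real
  assumes "n \<ge> 1" and "1 \<le> s" and "s \<le> n"
    and "sym_pos_def n C"
    and "0 < t" and "t \<le> lambda_min C"
  shows "\<forall>A. cholesky_factor n (C - t \<cdot>\<^sub>m 1\<^sub>m n) A \<longrightarrow>
    Max {ln (det (submatrix C S S)) | S. S \<subseteq> {0..<n} \<and> card S = s}
    = Max {ln (det (Mx n A x + t \<cdot>\<^sub>m 1\<^sub>m n)) | x.
              x \<in> carrier_vec n \<and> (\<forall>i<n. x $ i \<in> {0,1}) \<and> (\<Sum>i<n. x $ i) = real s}
      - real (n - s) * ln t"
proof (unfold setcompr_eq_image binary_vecs_eq_indicator_vecs, intro allI impI)
  \<comment> \<open>The bound \<open>t \<le> lambda_min C\<close> only guarantees that a Cholesky factor exists.\<close>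
  fix A assume chol: "cholesky_factor n (C - t \<cdot>\<^sub>m 1\<^sub>m n) A"
  have C: "C \<in> carrier_mat n n"
    using \<open>sym_pos_def n C\<close> by (simp add: sym_pos_def_def)
  let ?subsets = "{S. S \<subseteq> {0..<n} \<and> card S = s}"
  let ?logdet = "\<lambda>S. ln (det (submatrix C S S))"
  let ?c = "real (n - s) * ln t"
  have "finite ?subsets" and "?subsets \<noteq> {}"
    using \<open>s \<le> n\<close> by (auto intro: finite_subset[of _ "Pow {0..<n}"] exI[of _ "{0..<s}"])
  then have "Max (?logdet ` ?subsets) = Max ((\<lambda>S. ?logdet S + ?c) ` ?subsets) - ?c"
    by (simp add: Max_add_commute)
  also have "(\<lambda>S. ?logdet S + ?c) ` ?subsets
      = (\<lambda>x. ln (det (Mx n A x + t \<cdot>\<^sub>m 1\<^sub>m n))) ` indicator_vec n ` ?subsets"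
    using ln_det_Mx_indicator_vec_add[OF chol C \<open>t > 0\<close>] by (auto simp: image_image intro!: image_cong)
  finally show "Max (?logdet ` ?subsets)
      = Max ((\<lambda>x. ln (det (Mx n A x + t \<cdot>\<^sub>m 1\<^sub>m n))) ` indicator_vec n ` ?subsets) - ?c" .
qed

end
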